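(* Let $f:X\to Y$ be a function and $(Y,\preceq)$ a WQO, and define $x\preceq_f x'$ iff $f(x)\preceq f(x')$. Then $I\subseteq X$ is an ideal of $(X,\preceq_f)$ if and only if $I=f^{-1}(J)$ for some ideal $J$ of $(Y,\preceq)$ such that $\downarrow_\preceq f(f^{-1}(J))=J$.
   Context: For a quasi-order $\preceq$ on $Y$, $\downarrow_\preceq S=\{y\mid\exists s\in S: y\preceq s\}$. An ideal of a WQO is a nonempty subset that is downward closed and directed (any two elements have a common upper bound in the set). *)

theory Defs
  imports Main
begin

definition quasi_order :: "('b \<Rightarrow> 'b \<Rightarrow> bool) \<Rightarrow> bool" where
  "quasi_order le \<longleftrightarrow> (\<forall>x. le x x) \<and> (\<forall>x y z. le x y \<longrightarrow> le y z \<longrightarrow> le x z)"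

definition wqo :: "('b \<Rightarrow> 'b \<Rightarrow> bool) \<Rightarrow> bool" where
  "wqo le \<longleftrightarrow> quasi_order le \<and> (\<forall>s :: nat \<Rightarrow> 'b. \<exists>i j. i < j \<and> le (s i) (s j))"

definition down_closure :: "('b \<Rightarrow> 'b \<Rightarrow> bool) \<Rightarrow> 'b set \<Rightarrow> 'b set" where
  "down_closure le S = {y. \<exists>s\<in>S. le y s}"

definition is_ideal :: "('b \<Rightarrow> 'b \<Rightarrow> bool) \<Rightarrow> 'b set \<Rightarrow> bool" where
  "is_ideal le I \<longleftrightarrow> I \<noteq> {}
     \<and> (\<forall>x y. y \<in> I \<longrightarrow> le x y \<longrightarrow> x \<in> I)
     \<and> (\<forall>x\<in>I. \<forall>y\<in>I. \<exists>z\<in>I. le x z \<and> le y z)"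

end

theory Submission
  imports Defs
begin

text \<open>An ideal I of the pulled-back order is the preimage of J = \<down>f(I): J is directed because f(I) is
cofinal in it, and f -` J = I because I is downward closed. Conversely, a preimage f -` J is
always downward closed, and the condition \<down>f(f -` J) = J says exactly that every element of J
lies below some element of f(f -` J), which makes f -` J nonempty and directed.\<close>

lemma quasi_order_if_wqo: "wqo le \<Longrightarrow> quasi_order le"
  unfolding wqo_def by blast

lemma image_subset_down_closure:
  assumes "quasi_order le"
  shows "f ` I \<subseteq> down_closure le (f ` I)"
  using assms unfolding quasi_order_def down_closure_def by blast

lemma vimage_down_closure_image:
  assumes qo: "quasi_order le" and I: "is_ideal (\<lambda>x x'. le (f x) (f x')) I"
  shows "f -` down_closure le (f ` I) = I"
proof
  show "I \<subseteq> f -` down_closure le (f ` I)"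
    using image_subset_down_closure[OF qo, of f I] by blast
  show "f -` down_closure le (f ` I) \<subseteq> I"
    using I unfolding is_ideal_def down_closure_def by blast
qed

lemma is_ideal_down_closure_image:
  assumes qo: "quasi_order le" and I: "is_ideal (\<lambda>x x'. le (f x) (f x')) I"
  shows "is_ideal le (down_closure le (f ` I))"
  unfolding is_ideal_def
proof (intro conjI allI impI ballI)
  let ?J = "down_closure le (f ` I)"
  have trans: "\<And>x y z. le x y \<Longrightarrow> le y z \<Longrightarrow> le x z"
    using qo unfolding quasi_order_def by blast
  have nonempty: "I \<noteq> {}"
    and directed: "\<And>a b. a \<in> I \<Longrightarrow> b \<in> I \<Longrightarrow> \<exists>c\<in>I. le (f a) (f c) \<and> le (f b) (f c)"
    using I unfolding is_ideal_def by blast+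
  have image_in: "f ` I \<subseteq> ?J"
    using image_subset_down_closure[OF qo, of f I] .
  show "?J \<noteq> {}"
    using nonempty image_in by blast
  show "x \<in> ?J" if "y \<in> ?J" "le x y" for x y
    using that trans unfolding down_closure_def by blast
  show "\<exists>z\<in>?J. le x z \<and> le y z" if xy: "x \<in> ?J" "y \<in> ?J" for x y
  proof -
    obtain a b where a: "a \<in> I" "le x (f a)" and b: "b \<in> I" "le y (f b)"
      using xy unfolding down_closure_def by blast
    obtain c where c: "c \<in> I" "le (f a) (f c)" "le (f b) (f c)"
      using directed[OF a(1) b(1)] by blast
    show ?thesis
      using image_in c a(2) b(2) trans by blast
  qed
qed

lemma is_ideal_vimage:
  assumes qo: "quasi_order le" and J: "is_ideal le J"
    and cofinal: "down_closure le (f ` (f -` J)) = J"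
  shows "is_ideal (\<lambda>x x'. le (f x) (f x')) (f -` J)"
  unfolding is_ideal_def
proof (intro conjI allI impI ballI)
  have trans: "\<And>x y z. le x y \<Longrightarrow> le y z \<Longrightarrow> le x z"
    using qo unfolding quasi_order_def by blast
  have nonempty: "J \<noteq> {}" and down: "\<And>x y. y \<in> J \<Longrightarrow> le x y \<Longrightarrow> x \<in> J"
    and directed: "\<And>x y. x \<in> J \<Longrightarrow> y \<in> J \<Longrightarrow> \<exists>z\<in>J. le x z \<and> le y z"
    using J unfolding is_ideal_def by blast+
  have raise: "\<exists>w\<in>f -` J. le z (f w)" if "z \<in> J" for z
  proof -
    have "z \<in> down_closure le (f ` (f -` J))"
      using that cofinal by simp
    then show ?thesis
      unfolding down_closure_def by blast
  qed
  show "f -` J \<noteq> {}"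
    using nonempty raise by blast
  show "x \<in> f -` J" if "y \<in> f -` J" "le (f x) (f y)" for x y
    using that down by blast
  show "\<exists>z\<in>f -` J. le (f x) (f z) \<and> le (f y) (f z)" if xy: "x \<in> f -` J" "y \<in> f -` J" for x y
  proof -
    obtain z where z: "z \<in> J" "le (f x) z" "le (f y) z"
      using xy directed by blast
    obtain w where "w \<in> f -` J" "le z (f w)"
      using raise[OF z(1)] by blast
    then show ?thesis
      using z trans by blast
  qed
qed

theorem mainTheorem8:
  fixes f :: "'a \<Rightarrow> 'b" and le :: "'b \<Rightarrow> 'b \<Rightarrow> bool" and I :: "'a set"
  assumes "wqo le"
  shows "is_ideal (\<lambda>x x'. le (f x) (f x')) I \<longleftrightarrow>
         (\<exists>J. is_ideal le J \<and> I = f -` J \<and> down_closure le (f ` (f -` J)) = J)"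
proof
  have qo: "quasi_order le"
    using assms by (rule quasi_order_if_wqo)
  {
    assume I: "is_ideal (\<lambda>x x'. le (f x) (f x')) I"
    have preimage: "f -` down_closure le (f ` I) = I"
      using vimage_down_closure_image[OF qo I] .
    show "\<exists>J. is_ideal le J \<and> I = f -` J \<and> down_closure le (f ` (f -` J)) = J"
      using is_ideal_down_closure_image[OF qo I] preimage
      by (intro exI[of _ "down_closure le (f ` I)"]) simp
  }
  {
    assume "\<exists>J. is_ideal le J \<and> I = f -` J \<and> down_closure le (f ` (f -` J)) = J"
    then show "is_ideal (\<lambda>x x'. le (f x) (f x')) I"
      using is_ideal_vimage[OF qo] by blast
  }
qed

end
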